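(* For every finite simple graph $G$, the non-cover complex $\mathcal{NC}(G)$ is $(|V(G)|-i\gamma_w(G)-1)$-collapsible.
   Context: $\mathcal{NC}(G)$ is the simplicial complex on $V(G)$ whose faces are the sets $W\subseteq V(G)$ such that $V(G)\setminus W$ contains both endpoints of some edge (if $G$ has no edges it is the void complex). For $A,W\subseteq V(G)$, $W$ weakly dominates $A$ if every $w\in A$ either lies in $W$ or has a neighbor in $W$; $\gamma_w(G;A)$ is the minimum size of a set weakly dominating $A$; the weak independent domination number is $i\gamma_w(G)=\max\{\gamma_w(G;I): I\text{ an independent set of }G\}$. A face of a simplicial complex $X$ is free if it lies in a unique facet; an elementary $d$-collapse deletes all faces containing a free face of size at most $d$; $X$ is $d$-collapsible if the void complex is reachable by finitely many elementary $d$-collapses. *)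

theory Defs
  imports Main
begin

definition simple_graph :: "'a set \<Rightarrow> 'a set set \<Rightarrow> bool" where
  "simple_graph V E \<longleftrightarrow> finite V \<and> (\<forall>e\<in>E. e \<subseteq> V \<and> card e = 2)"

definition adjacent :: "'a set set \<Rightarrow> 'a \<Rightarrow> 'a \<Rightarrow> bool" where
  "adjacent E u v \<longleftrightarrow> {u, v} \<in> E"

definition independent_set :: "'a set \<Rightarrow> 'a set set \<Rightarrow> 'a set \<Rightarrow> bool" where
  "independent_set V E I \<longleftrightarrow> I \<subseteq> V \<and> (\<forall>u\<in>I. \<forall>v\<in>I. \<not> adjacent E u v)"

text \<open>The non-cover complex, as a set of faces. It is the empty set of faces
(the void complex) when there are no edges.\<close>
definition non_cover_complex :: "'a set \<Rightarrow> 'a set set \<Rightarrow> 'a set set" where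
  "non_cover_complex V E = {W. W \<subseteq> V \<and> (\<exists>e\<in>E. e \<subseteq> V - W)}"

definition weakly_dominates :: "'a set set \<Rightarrow> 'a set \<Rightarrow> 'a set \<Rightarrow> bool" where
  "weakly_dominates E W A \<longleftrightarrow> (\<forall>w\<in>A. w \<in> W \<or> (\<exists>u\<in>W. adjacent E u w))"

definition gamma_w :: "'a set \<Rightarrow> 'a set set \<Rightarrow> 'a set \<Rightarrow> nat" where
  "gamma_w V E A = Min {card W | W. W \<subseteq> V \<and> weakly_dominates E W A}"

definition i_gamma_w :: "'a set \<Rightarrow> 'a set set \<Rightarrow> nat" where
  "i_gamma_w V E = Max {gamma_w V E I | I. independent_set V E I}"

definition facet :: "'a set set \<Rightarrow> 'a set \<Rightarrow> bool" where
  "facet X \<tau> \<longleftrightarrow> \<tau> \<in> X \<and> \<not> (\<exists>\<rho>\<in>X. \<tau> \<subset> \<rho>)"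

definition free_face :: "'a set set \<Rightarrow> 'a set \<Rightarrow> bool" where
  "free_face X \<sigma> \<longleftrightarrow> \<sigma> \<in> X \<and> (\<exists>!\<tau>. facet X \<tau> \<and> \<sigma> \<subseteq> \<tau>)"

definition elementary_collapse :: "int \<Rightarrow> 'a set set \<Rightarrow> 'a set set \<Rightarrow> bool" where
  "elementary_collapse d X Y \<longleftrightarrow>
     (\<exists>\<sigma>. free_face X \<sigma> \<and> int (card \<sigma>) \<le> d \<and> Y = X - {\<tau>. \<sigma> \<subseteq> \<tau>})"

definition collapsible :: "int \<Rightarrow> 'a set set \<Rightarrow> bool" where
  "collapsible d X \<longleftrightarrow> (elementary_collapse d)\<^sup>*\<^sup>* X {}"

end

theory Submission
  imports Defs
begin

text \<open>Induct on the number of vertices, in the larger class of graphs that may have loops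
(edges of size one). Let I be an independent set attaining the weak independent domination
number and v a vertex outside I on some edge. The faces of NC(G) avoiding v form the non-cover
complex of the graph G' obtained by deleting v and putting a loop at each of its neighbours; the
faces containing v form the cone from v over NC(G - v). Now I is independent in G - v, and its
vertices not adjacent to v are independent in G'; a weak dominating set of the former in G - v,
resp. of the latter in G' together with v, weakly dominates I in G. Hence the induction
hypothesis makes the link (d-1)-collapsible and the deletion d-collapsible, and a cone over a
(d-1)-collapsible link attached to a d-collapsible base collapses face by face.\<close>

section \<open>Collapsing a cone over a link\<close>

lemma elementary_collapse_mono:
  "elementary_collapse d X Y \<Longrightarrow> d \<le> d' \<Longrightarrow> elementary_collapse d' X Y"
  unfolding elementary_collapse_def by force

lemma collapsible_mono: "collapsible d X \<Longrightarrow> d \<le> d' \<Longrightarrow> collapsible d' X"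
  unfolding collapsible_def
  using mono_rtranclp[of "elementary_collapse d" "elementary_collapse d'"] elementary_collapse_mono
  by blast

lemma elementary_collapse_subset: "elementary_collapse d X Y \<Longrightarrow> Y \<subseteq> X"
  unfolding elementary_collapse_def by auto

lemma collapsible_Pow:
  assumes "0 \<le> d"
  shows "collapsible d (Pow S)"
proof -
  have "facet (Pow S) \<tau> \<longleftrightarrow> \<tau> = S" for \<tau>
    unfolding facet_def by blast
  then have "free_face (Pow S) {}"
    unfolding free_face_def by simp
  then have "elementary_collapse d (Pow S) {}"
    unfolding elementary_collapse_def using assms by (intro exI[of _ "{}"]) auto
  then show ?thesis
    unfolding collapsible_def by blast
qed

lemma facet_cone_iff:
  assumes D: "\<forall>\<tau>\<in>D. v \<notin> \<tau>" and L: "\<forall>\<tau>\<in>L. v \<notin> \<tau>" and "\<rho> \<in> L"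
  shows "facet (D \<union> insert v ` L) (insert v \<rho>) \<longleftrightarrow> facet L \<rho>"
proof -
  have L_iff: "insert v \<rho> \<subset> insert v \<tau> \<longleftrightarrow> \<rho> \<subset> \<tau>" if "\<tau> \<in> L" for \<tau>
    using that \<open>\<rho> \<in> L\<close> L by (simp add: psubset_eq subset_insert insert_ident)
  have D_not: "\<not> insert v \<rho> \<subset> \<tau>" if "\<tau> \<in> D" for \<tau>
    using that D by blast
  have "(\<exists>\<tau>\<in>D \<union> insert v ` L. insert v \<rho> \<subset> \<tau>) \<longleftrightarrow> (\<exists>\<tau>\<in>L. insert v \<rho> \<subset> insert v \<tau>)"
    using D_not by (simp add: bex_Un)
  also have "\<dots> \<longleftrightarrow> (\<exists>\<tau>\<in>L. \<rho> \<subset> \<tau>)"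
    using L_iff by (intro bex_cong) simp_all
  finally show ?thesis
    using \<open>\<rho> \<in> L\<close> unfolding facet_def by simp
qed

lemma elementary_collapse_cone:
  assumes D: "\<forall>\<tau>\<in>D. v \<notin> \<tau>" and L: "\<forall>\<tau>\<in>L. v \<notin> \<tau>"
    and "elementary_collapse (d - 1) L L'"
  shows "elementary_collapse d (D \<union> insert v ` L) (D \<union> insert v ` L')"
proof -
  obtain \<sigma> where free: "free_face L \<sigma>" and card: "int (card \<sigma>) \<le> d - 1"
    and L': "L' = L - {\<tau>. \<sigma> \<subseteq> \<tau>}"
    using assms(3) unfolding elementary_collapse_def by blast
  obtain \<tau>\<^sub>0 where \<tau>\<^sub>0: "facet L \<tau>\<^sub>0" "\<sigma> \<subseteq> \<tau>\<^sub>0"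
    and unique: "\<And>\<tau>. facet L \<tau> \<Longrightarrow> \<sigma> \<subseteq> \<tau> \<Longrightarrow> \<tau> = \<tau>\<^sub>0"
    using free unfolding free_face_def by blast
  have "\<sigma> \<in> L" "\<tau>\<^sub>0 \<in> L"
    using free \<tau>\<^sub>0 by (simp_all add: free_face_def facet_def)
  then have "v \<notin> \<sigma>"
    using L by blast
  have "facet (D \<union> insert v ` L) \<tau> \<and> insert v \<sigma> \<subseteq> \<tau> \<longleftrightarrow> \<tau> = insert v \<tau>\<^sub>0" for \<tau>
  proof
    assume \<tau>: "facet (D \<union> insert v ` L) \<tau> \<and> insert v \<sigma> \<subseteq> \<tau>"
    then have "\<tau> \<in> D \<union> insert v ` L" "v \<in> \<tau>"
      by (simp_all add: facet_def)
    then obtain \<rho> where \<rho>: "\<rho> \<in> L" "\<tau> = insert v \<rho>"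
      using D by blast
    then have "facet L \<rho>" "\<sigma> \<subseteq> \<rho>"
      using \<tau> \<open>v \<notin> \<sigma>\<close> facet_cone_iff[OF D L \<rho>(1)] by auto
    then show "\<tau> = insert v \<tau>\<^sub>0"
      using unique \<rho> by simp
  next
    assume "\<tau> = insert v \<tau>\<^sub>0"
    then show "facet (D \<union> insert v ` L) \<tau> \<and> insert v \<sigma> \<subseteq> \<tau>"
      using facet_cone_iff[OF D L \<open>\<tau>\<^sub>0 \<in> L\<close>] \<tau>\<^sub>0 by auto
  qed
  then have "free_face (D \<union> insert v ` L) (insert v \<sigma>)"
    using \<open>\<sigma> \<in> L\<close> unfolding free_face_def by auto
  moreover have "int (card (insert v \<sigma>)) \<le> d"
    using card by (cases "finite \<sigma>") (auto simp: card_insert_if)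
  moreover have "D \<union> insert v ` L' = (D \<union> insert v ` L) - {\<tau>. insert v \<sigma> \<subseteq> \<tau>}"
    using D L \<open>v \<notin> \<sigma>\<close> unfolding L' by auto
  ultimately show ?thesis
    unfolding elementary_collapse_def by blast
qed

lemma collapsible_union_cone:
  assumes "collapsible (d - 1) L" "collapsible d D"
    and D: "\<forall>\<tau>\<in>D. v \<notin> \<tau>" and L: "\<forall>\<tau>\<in>L. v \<notin> \<tau>"
  shows "collapsible d (D \<union> insert v ` L)"
proof -
  have "(elementary_collapse d)\<^sup>*\<^sup>* (D \<union> insert v ` L) (D \<union> insert v ` M) \<and> M \<subseteq> L"
    if "(elementary_collapse (d - 1))\<^sup>*\<^sup>* L M" for M
    using that
  proof (induction rule: rtranclp_induct)
    case (step M M')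
    then have "\<forall>\<tau>\<in>M. v \<notin> \<tau>"
      using L by blast
    from elementary_collapse_cone[OF D this step(2)] step elementary_collapse_subset[OF step(2)]
    show ?case
      by auto
  qed simp
  from this[of "{}"] assms(1,2) show ?thesis
    unfolding collapsible_def by auto
qed

section \<open>Graphs with loops\<close>

definition graph_with_loops :: "'a set \<Rightarrow> 'a set set \<Rightarrow> bool" where
  "graph_with_loops V E \<longleftrightarrow> finite V \<and> (\<forall>e\<in>E. e \<subseteq> V \<and> e \<noteq> {} \<and> card e \<le> 2)"

definition delete_vertex :: "'a \<Rightarrow> 'a set set \<Rightarrow> 'a set set" where
  "delete_vertex v E = {e \<in> E. v \<notin> e}"

text \<open>Removing v from every edge turns each edge \<open>{u, v}\<close> into the loop \<open>{u}\<close>, and a loop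
at v into the empty edge.\<close>

definition contract_vertex :: "'a \<Rightarrow> 'a set set \<Rightarrow> 'a set set" where
  "contract_vertex v E = (\<lambda>e. e - {v}) ` E"

lemma graph_with_loops_delete_vertex:
  "graph_with_loops V E \<Longrightarrow> graph_with_loops (V - {v}) (delete_vertex v E)"
  by (auto simp: graph_with_loops_def delete_vertex_def)

lemma graph_with_loops_contract_vertex:
  assumes "graph_with_loops V E" "{v} \<notin> E"
  shows "graph_with_loops (V - {v}) (contract_vertex v E)"
proof -
  have "e - {v} \<subseteq> V - {v} \<and> e - {v} \<noteq> {} \<and> card (e - {v}) \<le> 2" if "e \<in> E" for e
  proof -
    have "e \<subseteq> V" "e \<noteq> {v}" "card e \<le> 2" "e \<noteq> {}"
      using that assms unfolding graph_with_loops_def by auto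
    then show ?thesis
      using card_Diff1_le[of e v] by auto
  qed
  then show ?thesis
    using assms(1) unfolding graph_with_loops_def contract_vertex_def by auto
qed

lemma card_le_2_obtain_pair:
  assumes "finite e" "e \<noteq> {}" "card e \<le> 2"
  obtains a b where "e = {a, b}"
proof -
  have "card e = 1 \<or> card e = 2"
    using assms card_gt_0_iff[of e] by linarith
  then show ?thesis
    using that by (auto simp: card_1_singleton_iff card_2_iff)
qed

lemma edge_Diff_vertex_cases:
  assumes "finite e" "card e \<le> 2" "e - {v} = {u, w}"
  shows "e = {u, w} \<or> (u = w \<and> e = {u, v})"
proof (cases "v \<in> e")
  case True
  then have e: "e = insert v {u, w}" and "v \<notin> {u, w}"
    using assms(3) by blast+
  then have "u = w"
    using assms(1,2) by (auto simp: card_insert_if split: if_splits)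
  with e show ?thesis
    by (simp add: insert_commute)
next
  case False
  then show ?thesis
    using assms(3) by simp
qed

lemma edge_not_subset_independent_set:
  assumes "graph_with_loops V E" "e \<in> E" "independent_set V E I"
  shows "\<not> e \<subseteq> I"
proof -
  have "finite e" "e \<noteq> {}" "card e \<le> 2"
    using assms(1,2) unfolding graph_with_loops_def by (auto intro: finite_subset)
  then obtain a b where "e = {a, b}"
    by (rule card_le_2_obtain_pair)
  with assms(2,3) show ?thesis
    unfolding independent_set_def adjacent_def by blast
qed

lemma non_cover_complex_no_edges: "non_cover_complex V {} = {}"
  by (simp add: non_cover_complex_def)

lemma non_cover_complex_empty_edge: "{} \<in> E \<Longrightarrow> non_cover_complex V E = Pow V"
  by (auto simp: non_cover_complex_def)

lemma vertex_notin_non_cover_complex_Diff: "\<forall>\<tau>\<in>non_cover_complex (V - {v}) E. v \<notin> \<tau>"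
  by (auto simp: non_cover_complex_def)

lemma insert_image_iff_Diff:
  assumes "v \<in> W" "\<forall>\<tau>\<in>X. v \<notin> \<tau>"
  shows "W \<in> insert v ` X \<longleftrightarrow> W - {v} \<in> X"
proof
  assume "W \<in> insert v ` X"
  then show "W - {v} \<in> X"
    using assms(2) by auto
next
  assume "W - {v} \<in> X"
  moreover have "W = insert v (W - {v})"
    using assms(1) by blast
  ultimately show "W \<in> insert v ` X"
    by (rule rev_image_eqI)
qed

lemma non_cover_complex_avoiding_vertex:
  assumes "\<forall>e\<in>E. e \<subseteq> V" "v \<notin> W"
  shows "W \<in> non_cover_complex V E \<longleftrightarrow> W \<in> non_cover_complex (V - {v}) (contract_vertex v E)"
proof -
  have "W \<subseteq> V \<longleftrightarrow> W \<subseteq> V - {v}"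
    using assms by blast
  moreover have "e \<subseteq> V - W \<longleftrightarrow> e - {v} \<subseteq> V - {v} - W" if "e \<in> E" for e
    using that assms by blast
  ultimately show ?thesis
    unfolding non_cover_complex_def contract_vertex_def by simp
qed

lemma non_cover_complex_containing_vertex:
  assumes "v \<in> V" "v \<notin> W"
  shows "insert v W \<in> non_cover_complex V E \<longleftrightarrow> W \<in> non_cover_complex (V - {v}) (delete_vertex v E)"
proof -
  have "insert v W \<subseteq> V \<longleftrightarrow> W \<subseteq> V - {v}"
    using assms by blast
  moreover have "e \<subseteq> V - insert v W \<longleftrightarrow> v \<notin> e \<and> e \<subseteq> V - {v} - W" for e
    by blast
  ultimately show ?thesis
    unfolding non_cover_complex_def delete_vertex_def by (simp add: Bex_def conj_ac)
qed

lemma non_cover_complex_vertex_split: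
  assumes "v \<in> V" "\<forall>e\<in>E. e \<subseteq> V"
  shows "non_cover_complex V E = non_cover_complex (V - {v}) (contract_vertex v E)
           \<union> insert v ` non_cover_complex (V - {v}) (delete_vertex v E)"
    (is "_ = ?D \<union> insert v ` ?L")
proof (rule set_eqI)
  fix W
  show "W \<in> non_cover_complex V E \<longleftrightarrow> W \<in> ?D \<union> insert v ` ?L"
  proof (cases "v \<in> W")
    case True
    have "W \<notin> ?D"
      using True vertex_notin_non_cover_complex_Diff[of V v "contract_vertex v E"] by blast
    moreover have "W \<in> insert v ` ?L \<longleftrightarrow> W - {v} \<in> ?L"
      using insert_image_iff_Diff[OF True vertex_notin_non_cover_complex_Diff] .
    moreover have "W \<in> non_cover_complex V E \<longleftrightarrow> W - {v} \<in> ?L"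
      using non_cover_complex_containing_vertex[OF assms(1), of "W - {v}"] True
      by (simp add: insert_absorb)
    ultimately show ?thesis
      by blast
  next
    case False
    then show ?thesis
      using non_cover_complex_avoiding_vertex[OF assms(2) False] by blast
  qed
qed

section \<open>Weak domination\<close>

lemma gamma_w_le:
  assumes "finite V" "W \<subseteq> V" "weakly_dominates E W A"
  shows "gamma_w V E A \<le> card W"
proof -
  have "finite {card W | W. W \<subseteq> V \<and> weakly_dominates E W A}"
    using assms(1) by simp
  then show ?thesis
    unfolding gamma_w_def using assms(2,3) by (intro Min_le) auto
qed

lemma gamma_w_attained:
  assumes "finite V" "A \<subseteq> V"
  obtains W where "W \<subseteq> V" "weakly_dominates E W A" "card W = gamma_w V E A"
proof -
  have fin: "finite {card W | W. W \<subseteq> V \<and> weakly_dominates E W A}"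
    using assms(1) by simp
  have "weakly_dominates E A A"
    by (simp add: weakly_dominates_def)
  then have "{card W | W. W \<subseteq> V \<and> weakly_dominates E W A} \<noteq> {}"
    using assms(2) by blast
  with fin have "gamma_w V E A \<in> {card W | W. W \<subseteq> V \<and> weakly_dominates E W A}"
    unfolding gamma_w_def by (rule Min_in)
  with that show ?thesis
    by auto
qed

lemma gamma_w_le_card: "finite V \<Longrightarrow> A \<subseteq> V \<Longrightarrow> gamma_w V E A \<le> card A"
  by (rule gamma_w_le) (auto simp: weakly_dominates_def)

lemma gamma_w_le_i_gamma_w:
  assumes "finite V" "independent_set V E I"
  shows "gamma_w V E I \<le> i_gamma_w V E"
proof -
  have "finite {gamma_w V E I | I. independent_set V E I}"
    using assms(1) by (simp add: independent_set_def)
  then show ?thesis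
    unfolding i_gamma_w_def using assms(2) by (intro Max_ge) auto
qed

lemma i_gamma_w_attained:
  assumes "finite V"
  obtains I where "independent_set V E I" "i_gamma_w V E = gamma_w V E I"
proof -
  have fin: "finite {gamma_w V E I | I. independent_set V E I}"
    using assms(1) by (simp add: independent_set_def)
  have "independent_set V E {}"
    by (simp add: independent_set_def)
  then have "{gamma_w V E I | I. independent_set V E I} \<noteq> {}"
    by blast
  with fin have "i_gamma_w V E \<in> {gamma_w V E I | I. independent_set V E I}"
    unfolding i_gamma_w_def by (rule Max_in)
  with that show ?thesis
    by auto
qed

lemma gamma_w_le_i_gamma_w_delete_vertex:
  assumes "finite V" "independent_set V E I" "v \<notin> I"
  shows "gamma_w V E I \<le> i_gamma_w (V - {v}) (delete_vertex v E)"
proof -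
  have I: "independent_set (V - {v}) (delete_vertex v E) I"
    using assms(2,3) unfolding independent_set_def adjacent_def delete_vertex_def by blast
  then obtain W where W: "W \<subseteq> V - {v}" "weakly_dominates (delete_vertex v E) W I"
    and card: "card W = gamma_w (V - {v}) (delete_vertex v E) I"
    using assms(1) gamma_w_attained[of "V - {v}" I] unfolding independent_set_def by blast
  have "weakly_dominates E W I"
    using W(2) unfolding weakly_dominates_def adjacent_def delete_vertex_def by blast
  with assms(1) W(1) have "gamma_w V E I \<le> card W"
    by (intro gamma_w_le) auto
  also have "\<dots> \<le> i_gamma_w (V - {v}) (delete_vertex v E)"
    unfolding card using assms(1) I by (intro gamma_w_le_i_gamma_w) auto
  finally show ?thesis .
qed

lemma independent_set_contract_vertex:
  assumes "\<forall>e\<in>E. finite e \<and> card e \<le> 2" "independent_set V E I" "v \<notin> I"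
  shows "independent_set (V - {v}) (contract_vertex v E) {u \<in> I. \<not> adjacent E u v}"
  unfolding independent_set_def
proof (intro conjI ballI notI)
  show "{u \<in> I. \<not> adjacent E u v} \<subseteq> V - {v}"
    using assms(2,3) unfolding independent_set_def by blast
next
  fix x y assume x: "x \<in> {u \<in> I. \<not> adjacent E u v}" and y: "y \<in> {u \<in> I. \<not> adjacent E u v}"
    and "adjacent (contract_vertex v E) x y"
  then obtain e where e: "e \<in> E" "e - {v} = {x, y}"
    unfolding adjacent_def contract_vertex_def by blast
  with assms(1) have "e = {x, y} \<or> (x = y \<and> e = {x, v})"
    by (intro edge_Diff_vertex_cases) auto
  with e(1) x y assms(2) show False
    unfolding independent_set_def adjacent_def by auto
qed

lemma weakly_dominates_insert_contract_vertex:
  assumes "\<forall>e\<in>E. finite e \<and> card e \<le> 2"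
    and "weakly_dominates (contract_vertex v E) W {u \<in> A. \<not> adjacent E u v}"
  shows "weakly_dominates E (insert v W) A"
  unfolding weakly_dominates_def
proof
  fix w assume "w \<in> A"
  show "w \<in> insert v W \<or> (\<exists>u\<in>insert v W. adjacent E u w)"
  proof (cases "adjacent E w v")
    case True
    then show ?thesis
      unfolding adjacent_def by (auto simp: insert_commute)
  next
    case False
    with \<open>w \<in> A\<close> assms(2) consider "w \<in> W" | u e where "u \<in> W" "e \<in> E" "e - {v} = {u, w}"
      unfolding weakly_dominates_def adjacent_def contract_vertex_def by blast
    then show ?thesis
    proof cases
      case (2 u e)
      with assms(1) have "e = {u, w} \<or> (u = w \<and> e = {u, v})"
        by (intro edge_Diff_vertex_cases) auto
      with 2 show ?thesis
        unfolding adjacent_def by auto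
    qed simp
  qed
qed

lemma gamma_w_le_i_gamma_w_contract_vertex:
  assumes "graph_with_loops V E" "independent_set V E I" "v \<in> V" "v \<notin> I"
  shows "gamma_w V E I \<le> i_gamma_w (V - {v}) (contract_vertex v E) + 1"
proof -
  let ?I = "{u \<in> I. \<not> adjacent E u v}"
  have fin: "finite V" and edges: "\<forall>e\<in>E. finite e \<and> card e \<le> 2"
    using assms(1) unfolding graph_with_loops_def by (auto intro: finite_subset)
  have I: "independent_set (V - {v}) (contract_vertex v E) ?I"
    using independent_set_contract_vertex[OF edges assms(2,4)] .
  then obtain W where W: "W \<subseteq> V - {v}" "weakly_dominates (contract_vertex v E) W ?I"
    and card: "card W = gamma_w (V - {v}) (contract_vertex v E) ?I"
    using fin gamma_w_attained[of "V - {v}" ?I] unfolding independent_set_def by blast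
  have "gamma_w V E I \<le> card (insert v W)"
    using fin W assms(3) weakly_dominates_insert_contract_vertex[OF edges W(2)]
    by (intro gamma_w_le) auto
  also have "\<dots> \<le> card W + 1"
    by (cases "finite W") (auto simp: card_insert_if)
  also have "\<dots> \<le> i_gamma_w (V - {v}) (contract_vertex v E) + 1"
    unfolding card using fin I by (simp add: gamma_w_le_i_gamma_w)
  finally show ?thesis .
qed

lemma collapsible_non_cover_complex_step:
  assumes G: "graph_with_loops V E" and I: "independent_set V E I" and v: "v \<in> V" "v \<notin> I"
    and IH: "\<And>E'. graph_with_loops (V - {v}) E' \<Longrightarrow>
      collapsible (int (card (V - {v})) - int (i_gamma_w (V - {v}) E') - 1) (non_cover_complex (V - {v}) E')"
  shows "collapsible (int (card V) - int (gamma_w V E I) - 1) (non_cover_complex V E)"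
proof -
  define d where "d = int (card V) - int (gamma_w V E I) - 1"
  have fin: "finite V" and edges: "\<forall>e\<in>E. e \<subseteq> V"
    using G unfolding graph_with_loops_def by auto
  have card_Diff: "card V = card (V - {v}) + 1"
    using card.remove[OF fin v(1)] by simp
  have link: "collapsible (d - 1) (non_cover_complex (V - {v}) (delete_vertex v E))"
    using IH[OF graph_with_loops_delete_vertex[OF G]]
  proof (rule collapsible_mono)
    show "int (card (V - {v})) - int (i_gamma_w (V - {v}) (delete_vertex v E)) - 1 \<le> d - 1"
      using gamma_w_le_i_gamma_w_delete_vertex[OF fin I v(2)] card_Diff unfolding d_def by linarith
  qed
  have deletion: "collapsible d (non_cover_complex (V - {v}) (contract_vertex v E))"
  proof (cases "{v} \<in> E")
    case True
    have "I \<subseteq> V - {v}"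
      using I v(2) unfolding independent_set_def by blast
    then have "gamma_w V E I \<le> card (V - {v})"
      using gamma_w_le_card[OF fin, of I E] card_mono[OF finite_Diff[OF fin]]
      by (meson Diff_subset order_trans subset_trans)
    then have "0 \<le> d"
      using card_Diff unfolding d_def by linarith
    moreover have "non_cover_complex (V - {v}) (contract_vertex v E) = Pow (V - {v})"
      using True by (intro non_cover_complex_empty_edge) (force simp: contract_vertex_def)
    ultimately show ?thesis
      by (simp add: collapsible_Pow)
  next
    case False
    show ?thesis
      using IH[OF graph_with_loops_contract_vertex[OF G False]]
    proof (rule collapsible_mono)
      show "int (card (V - {v})) - int (i_gamma_w (V - {v}) (contract_vertex v E)) - 1 \<le> d"
        using gamma_w_le_i_gamma_w_contract_vertex[OF G I v] card_Diff unfolding d_def by linarith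
    qed
  qed
  have "collapsible d (non_cover_complex V E)"
    unfolding non_cover_complex_vertex_split[OF v(1) edges]
    using link deletion vertex_notin_non_cover_complex_Diff vertex_notin_non_cover_complex_Diff
    by (rule collapsible_union_cone)
  then show ?thesis
    unfolding d_def .
qed

lemma collapsible_non_cover_complex:
  assumes "graph_with_loops V E"
  shows "collapsible (int (card V) - int (i_gamma_w V E) - 1) (non_cover_complex V E)"
  using assms
proof (induction "card V" arbitrary: V E rule: less_induct)
  case less
  show ?case
  proof (cases "E = {}")
    case True
    then show ?thesis
      by (simp add: non_cover_complex_no_edges collapsible_def)
  next
    case False
    then obtain e where e: "e \<in> E"
      by blast
    have fin: "finite V"
      using less.prems unfolding graph_with_loops_def by auto
    obtain I where I: "independent_set V E I" and i_gamma: "i_gamma_w V E = gamma_w V E I"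
      using i_gamma_w_attained[OF fin] .
    obtain v where v: "v \<in> V" "v \<notin> I"
      using edge_not_subset_independent_set[OF less.prems e I] e less.prems
      unfolding graph_with_loops_def by blast
    have "card (V - {v}) < card V"
      using fin v(1) by (rule card_Diff1_less)
    then show ?thesis
      unfolding i_gamma
      by (intro collapsible_non_cover_complex_step[OF less.prems I v] less.hyps)
  qed
qed

theorem corollary3p1:
  fixes V :: "'a set" and E :: "'a set set"
  assumes "simple_graph V E"
  shows "collapsible (int (card V) - int (i_gamma_w V E) - 1) (non_cover_complex V E)"
proof (rule collapsible_non_cover_complex)
  show "graph_with_loops V E"
    using assms unfolding simple_graph_def graph_with_loops_def by fastforce
qed

end
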